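(* Let $\Phi:\mathcal G^m_{[n]}\to(\mathbb R^m)^n$ be a vector-valued Shapley operator. Then for every $k\in[m]$ and every $i\in[n]$, the $k$-th coordinate $\pi_k(\Phi_i(v))$ depends only on the scalar game $\pi_k\circ v$. Equivalently, there exists a scalar value operator $\phi=(\phi_1,\dots,\phi_n):\mathcal G_{[n]}\to\mathbb R^n$ (the same for all $k$) such that for all $v\in\mathcal G^m_{[n]}$ and all $i\in[n]$, $$\Phi_i(v)=\big(\phi_i(\pi_1\circ v),\dots,\phi_i(\pi_m\circ v)\big).$$
   Context: Let $n,m\in\mathbb N$, $[n]=\{1,\dots,n\}$ and $\mathcal P([n])$ its power set. Let $\mathcal G_{[n]}=\{v:\mathcal P([n])\to\mathbb R:\ v(\varnothing)=0\}$ and $\mathcal G^m_{[n]}=\{v:\mathcal P([n])\to\mathbb R^m:\ v(\varnothing)=0\}$, real vector spaces under pointwise operations (elements are called games). For $k\in[m]$, $\pi_k:\mathbb R^m\to\mathbb R$ denotes the $k$-th coordinate projection. A scalar value operator is a map $\mathcal G_{[n]}\to\mathbb R^n$. A vector-valued value operator is a map $\Phi:\mathcal G^m_{[n]}\to(\mathbb R^m)^n$, $v\mapsto(\Phi_1(v),\dots,\Phi_n(v))$. It is called a vector-valued Shapley operator if, for all games (equalities in $\mathbb R^m$): (i) Efficiency: $\sum_{i=1}^n\Phi_i(v)=v([n])$; (ii) Symmetry: if $i\neq j$ and $v(S\cup\{i\})=v(S\cup\{j\})$ for all $S\subseteq[n]\setminus\{i,j\}$, then $\Phi_i(v)=\Phi_j(v)$;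 (iii) Dummy: if $v(S\cup\{i\})=v(S)$ for all $S\subseteq[n]\setminus\{i\}$, then $\Phi_i(v)=0$; (iv) Additivity: $\Phi(\alpha v+\beta w)=\alpha\Phi(v)+\beta\Phi(w)$ for all $v,w\in\mathcal G^m_{[n]}$, $\alpha,\beta\in\mathbb R$. For $m=1$ these are the scalar Shapley axioms for a scalar value operator. *)

theory Defs
  imports "HOL-Analysis.Analysis"
begin

(* Players: the finite type 'n (playing the role of [n]); coordinates: the finite type 'm
   (playing the role of [m]); R^m is real^'m and pi_k x = x $ k. *)

definition vgames :: "('n::finite set \<Rightarrow> real^'m) set" where
  "vgames = {v. v {} = 0}"

definition vector_shapley_operator ::
  "(('n::finite set \<Rightarrow> real^'m::finite) \<Rightarrow> 'n \<Rightarrow> real^'m) \<Rightarrow> bool" where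
  "vector_shapley_operator \<Phi> \<longleftrightarrow>
     (\<forall>v\<in>vgames. (\<Sum>i\<in>UNIV. \<Phi> v i) = v UNIV) \<and>
     (\<forall>v\<in>vgames. \<forall>i j. i \<noteq> j \<longrightarrow>
        (\<forall>S. S \<subseteq> UNIV - {i, j} \<longrightarrow> v (insert i S) = v (insert j S)) \<longrightarrow>
        \<Phi> v i = \<Phi> v j) \<and>
     (\<forall>v\<in>vgames. \<forall>i.
        (\<forall>S. S \<subseteq> UNIV - {i} \<longrightarrow> v (insert i S) = v S) \<longrightarrow> \<Phi> v i = 0) \<and>
     (\<forall>v\<in>vgames. \<forall>w\<in>vgames. \<forall>\<alpha> \<beta> :: real.
        \<Phi> (\<lambda>S. \<alpha> *\<^sub>R v S + \<beta> *\<^sub>R w S) = (\<lambda>i. \<alpha> *\<^sub>R \<Phi> v i + \<beta> *\<^sub>R \<Phi> w i))"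

end

theory Submission
  imports Defs
begin

(* Fix a coordinate k. Both v \<mapsto> \<Phi> v i $ k and v \<mapsto> \<Phi> (\<lambda>S. (v S $ k) *\<^sub>R 1) i $ k0 are
   linear, symmetric and dummy-respecting operators on vector games with total payoff v UNIV $ k.
   Such an operator is unique: the difference \<rho> of two of them has total payoff zero, so by
   symmetry and the dummy axiom it vanishes on every unanimity game; subtracting from a game v
   the unanimity game of a minimal coalition T with v T \<noteq> 0, scaled by v T, and inducting shows
   that \<rho> vanishes on all games. *)

definition linear_symmetric_dummy ::
  "(('n set \<Rightarrow> 'a::real_vector) \<Rightarrow> 'n \<Rightarrow> 'b::real_vector) \<Rightarrow> bool" where
  "linear_symmetric_dummy \<rho> \<longleftrightarrow>
     (\<forall>v w \<alpha> \<beta>. v {} = 0 \<longrightarrow> w {} = 0 \<longrightarrow>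
        \<rho> (\<lambda>S. \<alpha> *\<^sub>R v S + \<beta> *\<^sub>R w S) = (\<lambda>i. \<alpha> *\<^sub>R \<rho> v i + \<beta> *\<^sub>R \<rho> w i)) \<and>
     (\<forall>v i j. v {} = 0 \<longrightarrow> i \<noteq> j \<longrightarrow>
        (\<forall>S. S \<subseteq> UNIV - {i, j} \<longrightarrow> v (insert i S) = v (insert j S)) \<longrightarrow> \<rho> v i = \<rho> v j) \<and>
     (\<forall>v i. v {} = 0 \<longrightarrow>
        (\<forall>S. S \<subseteq> UNIV - {i} \<longrightarrow> v (insert i S) = v S) \<longrightarrow> \<rho> v i = 0)"

definition unanimity_game :: "'n set \<Rightarrow> 'a::zero \<Rightarrow> 'n set \<Rightarrow> 'a" where
  "unanimity_game T c = (\<lambda>S. if T \<subseteq> S then c else 0)"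

(* Subtracting the scaled unanimity game of T can create nonzero worths, but only above T,
   so the induction runs on the upward closure of the support rather than on the support. *)
definition upward_support :: "('n set \<Rightarrow> 'a::zero) \<Rightarrow> 'n set set" where
  "upward_support v = {S. \<exists>R\<subseteq>S. v R \<noteq> 0}"

lemma vector_shapley_operatorD:
  assumes "vector_shapley_operator \<Phi>"
  shows "linear_symmetric_dummy \<Phi>" and "v {} = 0 \<Longrightarrow> (\<Sum>i\<in>UNIV. \<Phi> v i) = v UNIV"
  using assms unfolding vector_shapley_operator_def linear_symmetric_dummy_def
  by (simp_all add: vgames_def)

lemma linear_symmetric_dummy_scale_add:
  assumes "linear_symmetric_dummy \<rho>" "v {} = 0" "w {} = 0"
  shows "\<rho> (\<lambda>S. \<alpha> *\<^sub>R v S + \<beta> *\<^sub>R w S) i = \<alpha> *\<^sub>R \<rho> v i + \<beta> *\<^sub>R \<rho> w i"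
  using assms unfolding linear_symmetric_dummy_def by metis

lemma linear_symmetric_dummy_symmetric:
  assumes "linear_symmetric_dummy \<rho>" "v {} = 0" "i \<noteq> j"
    and "\<And>S. S \<subseteq> UNIV - {i, j} \<Longrightarrow> v (insert i S) = v (insert j S)"
  shows "\<rho> v i = \<rho> v j"
  using assms unfolding linear_symmetric_dummy_def by blast

lemma linear_symmetric_dummy_dummy:
  assumes "linear_symmetric_dummy \<rho>" "v {} = 0"
    and "\<And>S. S \<subseteq> UNIV - {i} \<Longrightarrow> v (insert i S) = v S"
  shows "\<rho> v i = 0"
  using assms unfolding linear_symmetric_dummy_def by blast

lemma linear_symmetric_dummy_zero_game:
  assumes "linear_symmetric_dummy \<rho>"
  shows "\<rho> (\<lambda>S. 0) i = 0"
  using linear_symmetric_dummy_scale_add[where v = "\<lambda>S. 0" and w = "\<lambda>S. 0" and \<alpha> = 0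
      and \<beta> = 0] assms by simp

lemma linear_symmetric_dummy_diff_game:
  assumes "linear_symmetric_dummy \<rho>" "v {} = 0" "w {} = 0"
  shows "\<rho> (\<lambda>S. v S - w S) i = \<rho> v i - \<rho> w i"
  using linear_symmetric_dummy_scale_add[where v = v and w = w and \<alpha> = 1 and \<beta> = "-1"]
    assms by simp

lemma linear_symmetric_dummy_diff:
  assumes "linear_symmetric_dummy \<rho>\<^sub>1" "linear_symmetric_dummy \<rho>\<^sub>2"
  shows "linear_symmetric_dummy (\<lambda>v i. \<rho>\<^sub>1 v i - \<rho>\<^sub>2 v i)"
  using assms unfolding linear_symmetric_dummy_def
  by (simp add: fun_eq_iff algebra_simps)

lemma linear_symmetric_dummy_compose:
  assumes "linear_symmetric_dummy \<rho>" "linear f" "linear g"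
  shows "linear_symmetric_dummy (\<lambda>v i. f (\<rho> (\<lambda>S. g (v S)) i))"
proof -
  interpret f: linear f by fact
  interpret g: linear g by fact
  have "g (\<alpha> *\<^sub>R x + \<beta> *\<^sub>R y) = \<alpha> *\<^sub>R g x + \<beta> *\<^sub>R g y" for \<alpha> \<beta> x y
    by (simp add: g.add g.scale)
  then show ?thesis
    using assms(1) unfolding linear_symmetric_dummy_def
    by (simp add: f.add f.scale)
qed

lemma unanimity_game_value_zero:
  fixes \<rho> :: "('n::finite set \<Rightarrow> 'a::real_vector) \<Rightarrow> 'n \<Rightarrow> 'b::real_vector"
  assumes lsd: "linear_symmetric_dummy \<rho>" and "T \<noteq> {}"
    and total: "(\<Sum>i\<in>UNIV. \<rho> (unanimity_game T c) i) = 0"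
  shows "\<rho> (unanimity_game T c) i = 0"
proof -
  let ?u = "unanimity_game T c"
  have game: "?u {} = 0" using \<open>T \<noteq> {}\<close> by (simp add: unanimity_game_def)
  have outside: "\<rho> ?u j = 0" if "j \<notin> T" for j
    by (rule linear_symmetric_dummy_dummy[where v = ?u, OF lsd game])
      (use that in \<open>auto simp: unanimity_game_def\<close>)
  have inside: "\<rho> ?u j = \<rho> ?u t" if "j \<in> T" "t \<in> T" for j t
  proof (cases "j = t")
    case False
    show ?thesis
      by (rule linear_symmetric_dummy_symmetric[where v = ?u, OF lsd game False])
        (use that in \<open>auto simp: unanimity_game_def\<close>)
  qed simp
  obtain t where t: "t \<in> T" using \<open>T \<noteq> {}\<close> by auto
  have "(\<Sum>i\<in>UNIV. \<rho> ?u i) = (\<Sum>j\<in>T. \<rho> ?u j)"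
    by (rule sum.mono_neutral_right) (auto simp: outside)
  also have "\<dots> = real (card T) *\<^sub>R \<rho> ?u t"
    using inside[OF _ t] by (simp add: real_vector.sum_constant_scale)
  finally have "\<rho> ?u t = 0"
    using total \<open>T \<noteq> {}\<close> by simp
  then show ?thesis
    using inside[OF _ t] outside by (cases "i \<in> T") auto
qed

lemma upward_support_diff_unanimity_game:
  fixes v :: "'n set \<Rightarrow> 'a::ab_group_add"
  assumes "v T \<noteq> 0" and minimal: "\<And>R. R \<subset> T \<Longrightarrow> v R = 0"
  shows "upward_support (\<lambda>S. v S - unanimity_game T (v T) S) \<subset> upward_support v"
proof -
  have "upward_support (\<lambda>S. v S - unanimity_game T (v T) S) \<subseteq> upward_support v"
    by (auto simp: upward_support_def unanimity_game_def split: if_splits)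
  moreover have "T \<in> upward_support v"
    using \<open>v T \<noteq> 0\<close> by (auto simp: upward_support_def)
  moreover have "T \<notin> upward_support (\<lambda>S. v S - unanimity_game T (v T) S)"
    using minimal by (auto simp: upward_support_def unanimity_game_def psubset_eq)
  ultimately show ?thesis by blast
qed

lemma linear_symmetric_dummy_total_zero:
  fixes \<rho> :: "('n::finite set \<Rightarrow> 'a::real_vector) \<Rightarrow> 'n \<Rightarrow> 'b::real_vector"
  assumes lsd: "linear_symmetric_dummy \<rho>"
    and total: "\<And>v. v {} = 0 \<Longrightarrow> (\<Sum>i\<in>UNIV. \<rho> v i) = 0"
    and "v {} = 0"
  shows "\<rho> v i = 0"
  using \<open>v {} = 0\<close>
proof (induction "card (upward_support v)" arbitrary: v i rule: less_induct)
  case less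
  show ?case
  proof (cases "\<forall>S. v S = 0")
    case True
    then show ?thesis
      using linear_symmetric_dummy_zero_game[OF lsd] by (simp add: fun_eq_iff[symmetric])
  next
    case False
    then obtain T where "v T \<noteq> 0" and least: "\<And>R. v R \<noteq> 0 \<Longrightarrow> card T \<le> card R"
      using ex_has_least_nat[of "\<lambda>S. v S \<noteq> 0" _ card] by blast
    have minimal: "v R = 0" if "R \<subset> T" for R
      using least[of R] psubset_card_mono[OF _ that] by force
    have "T \<noteq> {}" using \<open>v T \<noteq> 0\<close> less.prems by auto
    let ?u = "unanimity_game T (v T)"
    have u_game: "?u {} = 0" using \<open>T \<noteq> {}\<close> by (simp add: unanimity_game_def)
    have "card (upward_support (\<lambda>S. v S - ?u S)) < card (upward_support v)"
      using upward_support_diff_unanimity_game[where v = v, OF \<open>v T \<noteq> 0\<close> minimal]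
      by (simp add: psubset_card_mono)
    then have "\<rho> (\<lambda>S. v S - ?u S) i = 0"
      using less.hyps less.prems u_game by simp
    moreover have "\<rho> ?u i = 0"
      using unanimity_game_value_zero[OF lsd \<open>T \<noteq> {}\<close>] total u_game by blast
    ultimately show ?thesis
      using linear_symmetric_dummy_diff_game[where v = v and w = ?u, OF lsd less.prems u_game]
      by simp
  qed
qed

lemma linear_symmetric_dummy_unique:
  fixes \<rho>\<^sub>1 \<rho>\<^sub>2 :: "('n::finite set \<Rightarrow> 'a::real_vector) \<Rightarrow> 'n \<Rightarrow> 'b::real_vector"
  assumes "linear_symmetric_dummy \<rho>\<^sub>1" "linear_symmetric_dummy \<rho>\<^sub>2"
    and total: "\<And>v. v {} = 0 \<Longrightarrow> (\<Sum>i\<in>UNIV. \<rho>\<^sub>1 v i) = (\<Sum>i\<in>UNIV. \<rho>\<^sub>2 v i)"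
    and "v {} = 0"
  shows "\<rho>\<^sub>1 v i = \<rho>\<^sub>2 v i"
  using linear_symmetric_dummy_total_zero[where v = v,
      OF linear_symmetric_dummy_diff[OF assms(1,2)] _ \<open>v {} = 0\<close>]
    total by (simp add: sum_subtractf)

theorem mainTheorem1:
  fixes \<Phi> :: "('n::finite set \<Rightarrow> real^'m::finite) \<Rightarrow> 'n \<Rightarrow> real^'m"
  assumes "vector_shapley_operator \<Phi>"
  shows "\<exists>\<phi> :: ('n set \<Rightarrow> real) \<Rightarrow> 'n \<Rightarrow> real.
           \<forall>v\<in>vgames. \<forall>i. \<Phi> v i = (\<chi> k. \<phi> (\<lambda>S. v S $ k) i)"
proof -
  note lsd = vector_shapley_operatorD(1)[OF assms]
  note efficient = vector_shapley_operatorD(2)[OF assms]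
  note linear_nth = bounded_linear_vec_nth[THEN bounded_linear.linear]
  fix k\<^sub>0 :: 'm
  define \<phi> where "\<phi> g i = \<Phi> (\<lambda>S. g S *\<^sub>R (\<chi> k. 1)) i $ k\<^sub>0" for g i
  have "\<Phi> v i $ k = \<phi> (\<lambda>S. v S $ k) i" if "v {} = 0" for v i k
    unfolding \<phi>_def
  proof (rule linear_symmetric_dummy_unique[where \<rho>\<^sub>1 = "\<lambda>v i. \<Phi> v i $ k" and v = v,
        OF _ _ _ that])
    show "linear_symmetric_dummy (\<lambda>v i. \<Phi> v i $ k)"
      using linear_symmetric_dummy_compose[OF lsd linear_nth linear_id] by simp
    show "linear_symmetric_dummy (\<lambda>v i. \<Phi> (\<lambda>S. (v S $ k) *\<^sub>R (\<chi> k. 1)) i $ k\<^sub>0)"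
      by (rule linear_symmetric_dummy_compose[OF lsd linear_nth])
        (rule bounded_linear_scaleR_const[OF bounded_linear_vec_nth, THEN bounded_linear.linear])
    show "(\<Sum>i\<in>UNIV. \<Phi> w i $ k) = (\<Sum>i\<in>UNIV. \<Phi> (\<lambda>S. (w S $ k) *\<^sub>R (\<chi> k. 1)) i $ k\<^sub>0)"
      if "w {} = 0" for w
      using that efficient by (simp flip: sum_component)
  qed
  then show ?thesis
    unfolding vgames_def by (auto simp: vec_eq_iff)
qed

end
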